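(* Let $G$ be a finite simple graph on $n$ vertices with $m$ edges. Let $I(G)=\sum_{\{u,v\}\in E(G)}|d(u)-d(v)|$, let $Z_G=\sum_{u\in V(G)} d(u)^2$, and let $\lambda_{\max}$ be the largest eigenvalue of the Laplacian matrix of $G$. Then $$I(G)\le \sqrt{m\,(nZ_G-4m^2)\,(\lambda_{\max}/n)}.$$
   Context: $d(u)$ denotes the degree of vertex $u$. The Laplacian matrix $L$ of a graph $G$ with vertex set $\{1,\dots,n\}$ is the $n\times n$ matrix with $L_{ij}=-1$ if $\{i,j\}\in E(G)$, $L_{ij}=0$ if $i\neq j$ and $\{i,j\}\notin E(G)$, and $L_{ii}=d(i)$; it is symmetric positive semidefinite, so its eigenvalues are real and nonnegative. *)

theory Defs
  imports "HOL-Analysis.Analysis"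
begin

definition simple_graph :: "('n::finite \<Rightarrow> 'n \<Rightarrow> bool) \<Rightarrow> bool" where
  "simple_graph E \<longleftrightarrow> (\<forall>u v. E u v \<longrightarrow> E v u) \<and> (\<forall>u. \<not> E u u)"

definition degree :: "('n::finite \<Rightarrow> 'n \<Rightarrow> bool) \<Rightarrow> 'n \<Rightarrow> nat" where
  "degree E u = card {v. E u v}"

definition edges :: "('n::finite \<Rightarrow> 'n \<Rightarrow> bool) \<Rightarrow> 'n set set" where
  "edges E = {{u, v} | u v. E u v}"

definition laplacian :: "('n::finite \<Rightarrow> 'n \<Rightarrow> bool) \<Rightarrow> real ^ 'n ^ 'n" where
  "laplacian E = (\<chi> i j. if i = j then real (degree E i) else if E i j then -1 else 0)"

definition mat_eigenvalue :: "real ^ 'n ^ 'n \<Rightarrow> real \<Rightarrow> bool" where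
  "mat_eigenvalue A l \<longleftrightarrow> (\<exists>x. x \<noteq> 0 \<and> A *v x = l *\<^sub>R x)"

text \<open>Largest eigenvalue of the Laplacian (real symmetric, so all eigenvalues real).\<close>
definition lambda_max :: "('n::finite \<Rightarrow> 'n \<Rightarrow> bool) \<Rightarrow> real" where
  "lambda_max E = Max {l. mat_eigenvalue (laplacian E) l}"

text \<open>Sum over edges {u,v} of |d u - d v|; each edge counted twice in the ordered sum.\<close>
definition irregularity :: "('n::finite \<Rightarrow> 'n \<Rightarrow> bool) \<Rightarrow> real" where
  "irregularity E = (\<Sum>u\<in>UNIV. \<Sum>v\<in>{v. E u v}. \<bar>real (degree E u) - real (degree E v)\<bar>) / 2"

definition zagreb1 :: "('n::finite \<Rightarrow> 'n \<Rightarrow> bool) \<Rightarrow> real" where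
  "zagreb1 E = (\<Sum>u\<in>UNIV. real (degree E u) ^ 2)"

end

theory Submission
  imports Defs
begin

text \<open>Writing the irregularity as a sum over the 2m arcs, Cauchy-Schwarz gives
  I(G)^2 <= m * sum over edges uv of (d u - d v)^2. That sum is the Laplacian quadratic form
  of the degree vector, which only sees differences and so is unchanged by centring the
  degrees at their mean 2m/n. By the Rayleigh principle it is at most lambda_max times the
  squared norm of the centred degree vector, and that squared norm is Z_G - 4m^2/n.\<close>

lemma inner_matrix_vector_mult_symmetric:
  fixes A :: "real^'n^'n"
  assumes "transpose A = A"
  shows "x \<bullet> (A *v y) = (A *v x) \<bullet> y"
  by (metis assms dot_lmul_matrix transpose_matrix_vector)

lemma linear_coeff_eq_0_if_quadratic_nonpos:
  fixes a b :: real
  assumes "\<And>t. t * a + t\<^sup>2 * b \<le> 0"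
  shows "a = 0"
proof -
  define c where "c = \<bar>b\<bar> + 1"
  have c: "c > 0" "c + b > 0" unfolding c_def by auto
  have "a\<^sup>2 * (c + b) / c\<^sup>2 = (a / c) * a + (a / c)\<^sup>2 * b"
    using c by (simp add: field_simps power2_eq_square)
  also have "\<dots> \<le> 0" by (rule assms)
  finally have "a\<^sup>2 * (c + b) / c\<^sup>2 \<le> 0" .
  then have "a\<^sup>2 * (c + b) \<le> 0"
    using c by (simp add: divide_le_0_iff)
  then show ?thesis
    using c(2) by (simp add: mult_le_0_iff)
qed

lemma eigenvector_if_maximises_quadratic_form:
  fixes A :: "real^'n^'n"
  assumes sym: "transpose A = A"
    and le: "\<And>y. y \<bullet> (A *v y) \<le> \<mu> * (y \<bullet> y)"
    and eq: "v \<bullet> (A *v v) = \<mu> * (v \<bullet> v)"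
  shows "A *v v = \<mu> *\<^sub>R v"
proof -
  define w where "w = A *v v - \<mu> *\<^sub>R v"
  \<comment> \<open>the Rayleigh quotient cannot increase when \<open>v\<close> is perturbed along \<open>w\<close>\<close>
  have "t * (2 * (w \<bullet> w)) + t\<^sup>2 * (w \<bullet> (A *v w) - \<mu> * (w \<bullet> w)) \<le> 0" for t
  proof -
    let ?y = "v + t *\<^sub>R w"
    have "?y \<bullet> (A *v ?y) - \<mu> * (?y \<bullet> ?y)
        = t * (2 * (w \<bullet> w)) + t\<^sup>2 * (w \<bullet> (A *v w) - \<mu> * (w \<bullet> w))"
      using eq inner_matrix_vector_mult_symmetric[OF sym, of v w]
      by (simp add: w_def matrix_vector_right_distrib matrix_vector_mult_scaleR
          inner_add_left inner_add_right inner_diff_left inner_commute power2_eq_square algebra_simps)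
    then show ?thesis using le[of ?y] by simp
  qed
  then have "2 * (w \<bullet> w) = 0" by (rule linear_coeff_eq_0_if_quadratic_nonpos)
  then show ?thesis by (simp add: w_def)
qed

lemma symmetric_matrix_eigenvalue_bounds_quadratic_form:
  fixes A :: "real^'n^'n"
  assumes sym: "transpose A = A"
  obtains \<mu> where "mat_eigenvalue A \<mu>" and "\<And>x. x \<bullet> (A *v x) \<le> \<mu> * (x \<bullet> x)"
proof -
  define q where "q x = x \<bullet> (A *v x)" for x :: "real^'n"
  have cont: "continuous_on (sphere 0 1) q"
    unfolding q_def by (intro continuous_intros linear_continuous_on matrix_vector_mul_linear)
  obtain v where v: "v \<in> sphere 0 1" and max: "\<And>y. y \<in> sphere 0 1 \<Longrightarrow> q y \<le> q v"
    using continuous_attains_sup[OF compact_sphere _ cont] by auto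
  have vv: "v \<bullet> v = 1" using v by (metis mem_sphere_0 norm_eq_1)
  have bound: "q x \<le> q v * (x \<bullet> x)" for x
  proof (cases "x = 0")
    case False
    have "q (inverse (norm x) *\<^sub>R x) \<le> q v" using False by (intro max) simp
    then have "q x / (norm x)\<^sup>2 \<le> q v"
      by (simp add: q_def matrix_vector_mult_scaleR divide_inverse power2_eq_square mult_ac)
    then show ?thesis
      using False by (simp add: divide_le_eq power2_norm_eq_inner mult.commute)
  qed (simp add: q_def)
  have "A *v v = q v *\<^sub>R v"
    using sym bound vv by (intro eigenvector_if_maximises_quadratic_form) (auto simp: q_def)
  moreover have "v \<noteq> 0" using v by auto
  ultimately have "mat_eigenvalue A (q v)" unfolding mat_eigenvalue_def by blast
  then show thesis using that bound unfolding q_def by blast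
qed

lemma eigenvectors_orthogonal_symmetric_matrix:
  fixes A :: "real^'n^'n"
  assumes "transpose A = A" and "A *v v = a *\<^sub>R v" and "A *v w = b *\<^sub>R w" and "a \<noteq> b"
  shows "v \<bullet> w = 0"
proof -
  have "b * (v \<bullet> w) = a * (v \<bullet> w)"
    using inner_matrix_vector_mult_symmetric[OF assms(1), of v w] assms(2,3) by simp
  with assms(4) show ?thesis by simp
qed

lemma finite_eigenvalues_symmetric_matrix:
  fixes A :: "real^'n^'n"
  assumes sym: "transpose A = A"
  shows "finite {l. mat_eigenvalue A l}"
proof -
  let ?L = "{l. mat_eigenvalue A l}"
  define f where "f l = (SOME x. x \<noteq> 0 \<and> A *v x = l *\<^sub>R x)" for l
  have f: "f l \<noteq> 0" "A *v f l = l *\<^sub>R f l" if "l \<in> ?L" for l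
    using someI_ex[of "\<lambda>x. x \<noteq> 0 \<and> A *v x = l *\<^sub>R x"] that
    unfolding f_def mat_eigenvalue_def by auto
  have orth: "f a \<bullet> f b = 0" if "a \<in> ?L" "b \<in> ?L" "a \<noteq> b" for a b
    using eigenvectors_orthogonal_symmetric_matrix[OF sym] f that by blast
  have "inj_on f ?L"
    using orth f(1) by (metis inj_onI inner_eq_zero_iff)
  moreover have "independent (f ` ?L)"
    using orth f(1) by (intro pairwise_orthogonal_independent) (auto simp: pairwise_def orthogonal_def)
  then have "finite (f ` ?L)" using independent_bound by blast
  ultimately show ?thesis using finite_imageD by blast
qed

lemma quadratic_form_le_Max_eigenvalue:
  fixes A :: "real^'n^'n"
  assumes sym: "transpose A = A"
  shows "x \<bullet> (A *v x) \<le> Max {l. mat_eigenvalue A l} * (x \<bullet> x)"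
proof -
  obtain \<mu> where \<mu>: "mat_eigenvalue A \<mu>" and bound: "\<And>x. x \<bullet> (A *v x) \<le> \<mu> * (x \<bullet> x)"
    using symmetric_matrix_eigenvalue_bounds_quadratic_form[OF sym] by blast
  have "\<mu> \<le> Max {l. mat_eigenvalue A l}"
    using \<mu> finite_eigenvalues_symmetric_matrix[OF sym] by (intro Max_ge) auto
  then have "\<mu> * (x \<bullet> x) \<le> Max {l. mat_eigenvalue A l} * (x \<bullet> x)"
    by (intro mult_right_mono) simp_all
  with bound[of x] show ?thesis by linarith
qed

definition arcs :: "('n::finite \<Rightarrow> 'n \<Rightarrow> bool) \<Rightarrow> ('n \<times> 'n) set" where
  "arcs E = {(u, v). E u v}"

lemma arcs_eq_Sigma: "arcs E = (SIGMA u:UNIV. {v. E u v})"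
  by (auto simp: arcs_def)

lemma sum_degree_eq_card_arcs: "(\<Sum>u\<in>UNIV. degree E u) = card (arcs E)"
  unfolding arcs_eq_Sigma degree_def by (simp add: card_SigmaI)

lemma card_arcs:
  fixes E :: "'n::finite \<Rightarrow> 'n \<Rightarrow> bool"
  assumes g: "simple_graph E"
  shows "card (arcs E) = 2 * card (edges E)"
proof -
  define e_of where "e_of p = {fst p, snd p}" for p :: "'n \<times> 'n"
  have "e_of ` arcs E \<subseteq> edges E" unfolding e_of_def arcs_def edges_def by force
  moreover have "card {p \<in> arcs E. e_of p = e} = 2" if eE: "e \<in> edges E" for e
  proof -
    obtain a b where e: "e = {a, b}" and ab: "E a b" using eE unfolding edges_def by blast
    with g have "a \<noteq> b" "E b a" unfolding simple_graph_def by auto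
    moreover have "{p \<in> arcs E. e_of p = e} = {(a, b), (b, a)}"
      using ab \<open>E b a\<close> unfolding e_of_def e arcs_def by (auto simp: doubleton_eq_iff)
    ultimately show ?thesis by simp
  qed
  ultimately have "card (arcs E) = (\<Sum>e\<in>edges E. 2)"
    using card_eq_sum sum.group[of "arcs E" "edges E" e_of "\<lambda>_. 1::nat"] by simp
  then show ?thesis by simp
qed

lemma sum_arcs_swap:
  assumes "simple_graph E"
  shows "(\<Sum>(u, v)\<in>arcs E. h u v) = (\<Sum>(u, v)\<in>arcs E. h v u)"
proof -
  have "prod.swap ` arcs E = arcs E"
    using assms unfolding simple_graph_def arcs_def by force
  then show ?thesis
    using sum.reindex[of prod.swap "arcs E" "\<lambda>(u, v). h u v"] by (simp add: comp_def case_prod_beta)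
qed

lemma laplacian_transpose:
  assumes "simple_graph E"
  shows "transpose (laplacian E) = laplacian E"
  using assms unfolding simple_graph_def by (auto simp: vec_eq_iff transpose_def laplacian_def)

lemma laplacian_mult_vec_nth:
  assumes "simple_graph E"
  shows "(laplacian E *v x) $ u = real (degree E u) * x $ u - (\<Sum>v\<in>{v. E u v}. x $ v)"
proof -
  have "(laplacian E *v x) $ u
      = (\<Sum>v\<in>UNIV. (if u = v then real (degree E u) * x $ v else 0) + (if E u v then - x $ v else 0))"
    using assms unfolding matrix_vector_mult_def laplacian_def simple_graph_def
    by (auto intro!: sum.cong)
  then show ?thesis
    by (simp add: sum.distrib sum.inter_filter[symmetric] sum_negf)
qed

lemma laplacian_quadratic_form:
  assumes g: "simple_graph E"
  shows "x \<bullet> (laplacian E *v x) = (\<Sum>(u, v)\<in>arcs E. (x $ u - x $ v)\<^sup>2) / 2"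
proof -
  define h where "h u v = x $ u * x $ u - x $ u * x $ v" for u v
  have "x \<bullet> (laplacian E *v x) = (\<Sum>u\<in>UNIV. \<Sum>v\<in>{v. E u v}. h u v)"
    unfolding inner_vec_def laplacian_mult_vec_nth[OF g] h_def
    by (simp add: sum_subtractf sum_distrib_left degree_def algebra_simps)
  also have "\<dots> = (\<Sum>(u, v)\<in>arcs E. h u v)"
    by (simp add: arcs_eq_Sigma sum.Sigma)
  finally have "x \<bullet> (laplacian E *v x) = (\<Sum>(u, v)\<in>arcs E. h u v)" .
  moreover have "(\<Sum>(u, v)\<in>arcs E. (x $ u - x $ v)\<^sup>2) = (\<Sum>(u, v)\<in>arcs E. h u v + h v u)"
    by (intro sum.cong) (auto simp: h_def power2_eq_square algebra_simps)
  moreover have "\<dots> = (\<Sum>(u, v)\<in>arcs E. h u v) + (\<Sum>(u, v)\<in>arcs E. h v u)"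
    by (simp add: sum.distrib split_def)
  ultimately show ?thesis
    using sum_arcs_swap[OF g, of h] by simp
qed

lemma irregularity_eq_sum_arcs:
  "irregularity E = (\<Sum>(u, v)\<in>arcs E. \<bar>real (degree E u) - real (degree E v)\<bar>) / 2"
  unfolding irregularity_def arcs_eq_Sigma by (simp add: sum.Sigma)

lemma sum_square_deviation_mean:
  fixes f :: "'a \<Rightarrow> real"
  shows "(\<Sum>a\<in>A. (f a - sum f A / card A)\<^sup>2) = (\<Sum>a\<in>A. (f a)\<^sup>2) - (sum f A)\<^sup>2 / card A"
proof (cases "card A = 0")
  case False
  define c where "c = sum f A / card A"
  have "(\<Sum>a\<in>A. (f a - c)\<^sup>2) = (\<Sum>a\<in>A. (f a)\<^sup>2 - 2 * c * f a + c\<^sup>2)"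
    by (simp add: power2_diff algebra_simps)
  also have "\<dots> = (\<Sum>a\<in>A. (f a)\<^sup>2) - 2 * c * sum f A + card A * c\<^sup>2"
    by (simp add: sum.distrib sum_subtractf sum_distrib_left)
  finally show ?thesis
    using False by (simp add: c_def power2_eq_square field_simps)
qed simp

theorem theorem2:
  fixes E :: "'n::finite \<Rightarrow> 'n \<Rightarrow> bool"
  assumes "simple_graph E"
  defines "n \<equiv> real CARD('n)" and "m \<equiv> real (card (edges E))"
  shows "irregularity E \<le> sqrt (m * (n * zagreb1 E - 4 * m ^ 2) * (lambda_max E / n))"
proof -
  note g = assms(1)
  define d where "d u = real (degree E u)" for u
  define x :: "real^'n" where "x = (\<chi> u. d u - sum d UNIV / n)"
  have arcs_card: "real (card (arcs E)) = 2 * m"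
    using card_arcs[OF g] unfolding m_def by simp
  have sum_d: "sum d UNIV = 2 * m"
    using sum_degree_eq_card_arcs[of E] arcs_card unfolding d_def by (metis of_nat_sum)
  have "(irregularity E)\<^sup>2 = (\<Sum>(u, v)\<in>arcs E. \<bar>d u - d v\<bar>)\<^sup>2 / 4"
    unfolding irregularity_eq_sum_arcs d_def by (simp add: power_divide)
  also have "\<dots> \<le> m * ((\<Sum>(u, v)\<in>arcs E. (d u - d v)\<^sup>2) / 2)"
    using sum_squared_le_sum_of_squares[of "\<lambda>(u, v). \<bar>d u - d v\<bar>" "arcs E"] arcs_card
    by (simp add: case_prod_beta mult_ac)
  also have "\<dots> = m * (x \<bullet> (laplacian E *v x))"
    unfolding laplacian_quadratic_form[OF g] x_def by simp
  also have "\<dots> \<le> m * (lambda_max E * (x \<bullet> x))"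
    using quadratic_form_le_Max_eigenvalue[OF laplacian_transpose[OF g]]
    unfolding lambda_max_def by (intro mult_left_mono) (simp_all add: m_def)
  also have "x \<bullet> x = zagreb1 E - (2 * m)\<^sup>2 / n"
    using sum_square_deviation_mean[of d UNIV] sum_d
    unfolding x_def inner_vec_def zagreb1_def d_def n_def by (simp add: power2_eq_square)
  also have "m * (lambda_max E * \<dots>) = m * (n * zagreb1 E - 4 * m ^ 2) * (lambda_max E / n)"
    by (simp add: n_def field_simps power2_eq_square)
  finally show ?thesis by (rule real_le_rsqrt)
qed

end
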